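(* Consider any single round of Algorithm 2 on a connected graph $G$ with nonnegative integer loads, and let $L_{max},L_{min}$ be the maximum and minimum loads at the beginning of the round. Then: (1) if node $u$ transferred load to node $v$ in this round, then at the end of the round $load(v)\le load(u)$; (2) every node whose load strictly decreases in the round ends with load strictly greater than $L_{min}$, and every node whose load strictly increases ends with load strictly less than $L_{max}$; consequently Algorithm 2 is monotonic.
   Context: $G=(V,E)$ is an undirected connected graph; each node $u$ holds an integer load $load(u)\ge 0$. Algorithm 2 (single proposal, discrete) proceeds in synchronous rounds; in each round, using the loads at the start of the round: (1) every node $u$ having at least one neighbor $v$ with $load(v)\le load(u)-2$ picks the first neighbor $v$ (in a fixed order of its neighbors) maximizing $load(u)-load(v)$ and sends $v$ a proposal of value $p_{uv}=\lfloor (load(u)-load(v))/2\rfloor$; (2) every node that received at least one proposal accepts exactly one proposal of maximum value; (3) all accepted transfers are executed simultaneously (each accepted proposal $p_{wu}$ moves $p_{wu}$ from $w$ to $u$), and nodes report their new loads to neighbors. An algorithm is monotonic if in every execution (a) each load transfer goes from a higher-loaded node to a less-loaded one, and (b) the maximum load never increases and the minimum load never decreases. *)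

theory Defs
  imports Main
begin

text \<open>Graph: vertex set V, symmetric irreflexive adjacency E on V, connected;
  nb u is the fixed order of the neighbours of u.\<close>
definition graph_ok :: "'a set \<Rightarrow> ('a \<Rightarrow> 'a \<Rightarrow> bool) \<Rightarrow> ('a \<Rightarrow> 'a list) \<Rightarrow> bool" where
  "graph_ok V E nb \<longleftrightarrow> finite V \<and> V \<noteq> {} \<and>
     (\<forall>u v. E u v \<longrightarrow> u \<in> V \<and> v \<in> V \<and> u \<noteq> v \<and> E v u) \<and>
     (\<forall>u\<in>V. distinct (nb u) \<and> set (nb u) = {v. E u v}) \<and>
     (\<forall>u\<in>V. \<forall>v\<in>V. (u, v) \<in> {(x, y). E x y}\<^sup>*)"

definition has_prop :: "('a \<Rightarrow> 'a list) \<Rightarrow> ('a \<Rightarrow> int) \<Rightarrow> 'a \<Rightarrow> bool" where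
  "has_prop nb L u \<longleftrightarrow> (\<exists>v\<in>set (nb u). L v \<le> L u - 2)"

definition ptarget :: "('a \<Rightarrow> 'a list) \<Rightarrow> ('a \<Rightarrow> int) \<Rightarrow> 'a \<Rightarrow> 'a" where
  "ptarget nb L u = hd (filter (\<lambda>v. \<forall>w\<in>set (nb u). L u - L w \<le> L u - L v) (nb u))"

definition proposes :: "('a \<Rightarrow> 'a list) \<Rightarrow> ('a \<Rightarrow> int) \<Rightarrow> 'a \<Rightarrow> 'a \<Rightarrow> bool" where
  "proposes nb L u v \<longleftrightarrow> has_prop nb L u \<and> v = ptarget nb L u"

text \<open>Proposal value floor((load u - load v)/2) (int div is floor division).\<close>
definition pval :: "('a \<Rightarrow> int) \<Rightarrow> 'a \<Rightarrow> 'a \<Rightarrow> int" where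
  "pval L u v = (L u - L v) div 2"

text \<open>acc v = Some w: v accepts the proposal of w; acc v = None: v accepts nothing.
  Every node receiving a proposal accepts exactly one of maximum value (ties arbitrary).\<close>
definition valid_acc :: "'a set \<Rightarrow> ('a \<Rightarrow> 'a list) \<Rightarrow> ('a \<Rightarrow> int) \<Rightarrow> ('a \<Rightarrow> 'a option) \<Rightarrow> bool" where
  "valid_acc V nb L acc \<longleftrightarrow>
     (\<forall>v. v \<notin> V \<longrightarrow> acc v = None) \<and>
     (\<forall>v\<in>V. (acc v = None \<longleftrightarrow> \<not> (\<exists>w\<in>V. proposes nb L w v)) \<and>
        (\<forall>w. acc v = Some w \<longrightarrow> w \<in> V \<and> proposes nb L w v \<and>
              (\<forall>w'\<in>V. proposes nb L w' v \<longrightarrow> pval L w' v \<le> pval L w v)))"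

definition new_load :: "'a set \<Rightarrow> ('a \<Rightarrow> 'a list) \<Rightarrow> ('a \<Rightarrow> int) \<Rightarrow> ('a \<Rightarrow> 'a option) \<Rightarrow> 'a \<Rightarrow> int" where
  "new_load V nb L acc u =
     L u - (if \<exists>v\<in>V. acc v = Some u then pval L u (ptarget nb L u) else 0)
         + (case acc u of None \<Rightarrow> 0 | Some w \<Rightarrow> pval L w u)"

definition monotonic :: "'a set \<Rightarrow> ('a \<Rightarrow> 'a list) \<Rightarrow> bool" where
  "monotonic V nb \<longleftrightarrow>
     (\<forall>(Ls :: nat \<Rightarrow> 'a \<Rightarrow> int) (As :: nat \<Rightarrow> 'a \<Rightarrow> 'a option).
        (\<forall>u\<in>V. 0 \<le> Ls 0 u) \<and>
        (\<forall>i. valid_acc V nb (Ls i) (As i) \<and> Ls (Suc i) = new_load V nb (Ls i) (As i))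
        \<longrightarrow> (\<forall>i. \<forall>u\<in>V. \<forall>v\<in>V. As i v = Some u \<longrightarrow> Ls i v < Ls i u) \<and>
            (\<forall>i. Max (Ls (Suc i) ` V) \<le> Max (Ls i ` V) \<and> Min (Ls i ` V) \<le> Min (Ls (Suc i) ` V)))"

end

theory Submission
  imports Defs
begin

text \<open>A transfer of p = \<lfloor>(L u - L v)/2\<rfloor> from u to v satisfies L v + 2 p \<le> L u and p \<ge> 1,
  because proposals are only sent across a load gap of at least 2. Since every node accepts
  at most one proposal and sends at most one, a sender u keeps at least L u - p \<ge> L v + p, while
  its receiver v ends with at most L v + p. The same two inequalities show that a node losing
  load stays strictly above its receiver's old load, and a node gaining load stays strictly
  below its sender's old load; both are within [min L, max L].\<close>

lemma ptarget_load_le: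
  assumes "has_prop nb L u"
  shows "L (ptarget nb L u) \<le> L u - 2"
proof -
  obtain v0 where v0: "v0 \<in> set (nb u)" "L v0 \<le> L u - 2"
    using assms unfolding has_prop_def by blast
  let ?maximal = "\<lambda>v. \<forall>w\<in>set (nb u). L u - L w \<le> L u - L v"
  have fin: "finite (L ` set (nb u))" "L ` set (nb u) \<noteq> {}" using v0 by auto
  obtain m where m: "m \<in> set (nb u)" "L m = Min (L ` set (nb u))"
    using Min_in[OF fin] by auto
  then have "?maximal m" using fin by simp
  then have "filter ?maximal (nb u) \<noteq> []" using m(1) by (simp only: filter_empty_conv) blast
  then have "hd (filter ?maximal (nb u)) \<in> set (filter ?maximal (nb u))" by (rule hd_in_set)
  then have "L (hd (filter ?maximal (nb u))) \<le> L v0" using v0(1) by fastforce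
  then show ?thesis using v0(2) unfolding ptarget_def by simp
qed

lemma proposes_load_le:
  "proposes nb L w v \<Longrightarrow> v = ptarget nb L w \<and> L v \<le> L w - 2"
  by (auto simp: proposes_def ptarget_load_le)

lemma pval_bounds:
  assumes "L v \<le> L u - 2"
  shows "1 \<le> pval L u v" and "L v + 2 * pval L u v \<le> L u"
  using assms unfolding pval_def by linarith+

definition sent_load :: "'a set \<Rightarrow> ('a \<Rightarrow> 'a list) \<Rightarrow> ('a \<Rightarrow> int) \<Rightarrow> ('a \<Rightarrow> 'a option) \<Rightarrow> 'a \<Rightarrow> int" where
  "sent_load V nb L acc u = (if \<exists>v\<in>V. acc v = Some u then pval L u (ptarget nb L u) else 0)"

definition received_load :: "('a \<Rightarrow> int) \<Rightarrow> ('a \<Rightarrow> 'a option) \<Rightarrow> 'a \<Rightarrow> int" where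
  "received_load L acc u = (case acc u of None \<Rightarrow> 0 | Some w \<Rightarrow> pval L w u)"

lemma new_load_eq:
  "new_load V nb L acc u = L u - sent_load V nb L acc u + received_load L acc u"
  unfolding new_load_def sent_load_def received_load_def by simp

context
  fixes V :: "'a set" and nb :: "'a \<Rightarrow> 'a list" and L :: "'a \<Rightarrow> int" and acc :: "'a \<Rightarrow> 'a option"
  assumes valid: "valid_acc V nb L acc"
begin

lemma accepted_proposal:
  assumes "acc v = Some w"
  shows "v \<in> V" "w \<in> V" "L v \<le> L w - 2" "v = ptarget nb L w"
proof -
  show "v \<in> V" using valid assms unfolding valid_acc_def by (metis option.distinct(1))
  then have "w \<in> V \<and> proposes nb L w v" using valid assms unfolding valid_acc_def by blast
  then show "w \<in> V" "L v \<le> L w - 2" "v = ptarget nb L w"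
    using proposes_load_le[of nb L w v] by auto
qed

lemma accepted_pval_bounds:
  assumes "acc v = Some u"
  shows "1 \<le> pval L u v" and "L v + 2 * pval L u v \<le> L u"
  using pval_bounds[of L v u, OF accepted_proposal(3)[OF assms]] by simp_all

lemma sent_load_eq:
  "acc v = Some u \<Longrightarrow> sent_load V nb L acc u = pval L u v"
  using accepted_proposal unfolding sent_load_def by metis

lemma sent_load_nonneg: "0 \<le> sent_load V nb L acc u"
proof (cases "\<exists>v\<in>V. acc v = Some u")
  case True
  then obtain v where "acc v = Some u" by blast
  then show ?thesis using accepted_pval_bounds(1) sent_load_eq by fastforce
qed (simp add: sent_load_def)

lemma received_load_nonneg: "0 \<le> received_load L acc u"
  using accepted_pval_bounds(1)[of u] unfolding received_load_def
  by (cases "acc u") fastforce+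

lemma new_load_lt_imp_exists_below:
  assumes "new_load V nb L acc x < L x"
  shows "\<exists>t\<in>V. L t < new_load V nb L acc x"
proof -
  have "sent_load V nb L acc x \<noteq> 0"
    using assms received_load_nonneg[of x] new_load_eq[of V nb L acc x] by linarith
  then obtain v where v: "acc v = Some x" unfolding sent_load_def by (auto split: if_splits)
  then have "L v < new_load V nb L acc x"
    using accepted_pval_bounds[OF v] sent_load_eq[OF v] received_load_nonneg[of x]
      new_load_eq[of V nb L acc x] by linarith
  then show ?thesis using accepted_proposal(1)[OF v] by blast
qed

lemma new_load_gt_imp_exists_above:
  assumes "L x < new_load V nb L acc x"
  shows "\<exists>w\<in>V. new_load V nb L acc x < L w"
proof -
  have "received_load L acc x \<noteq> 0"
    using assms sent_load_nonneg[of x] new_load_eq[of V nb L acc x] by linarith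
  then obtain w where w: "acc x = Some w" unfolding received_load_def by (auto split: option.splits)
  then have "new_load V nb L acc x < L w"
    using accepted_pval_bounds[OF w] sent_load_nonneg[of x] new_load_eq[of V nb L acc x]
    unfolding received_load_def by simp
  then show ?thesis using accepted_proposal(2)[OF w] by blast
qed

lemma transfer_preserves_order:
  assumes "acc v = Some u"
  shows "new_load V nb L acc v \<le> new_load V nb L acc u" and "L v < L u"
proof -
  note gap = accepted_pval_bounds[OF assms]
  have "new_load V nb L acc v \<le> L v + pval L u v"
    using assms sent_load_nonneg[of v] new_load_eq[of V nb L acc v]
    unfolding received_load_def by simp
  moreover have "L u - pval L u v \<le> new_load V nb L acc u"
    using received_load_nonneg[of u] new_load_eq[of V nb L acc u] sent_load_eq[OF assms] by simp
  ultimately show "new_load V nb L acc v \<le> new_load V nb L acc u" using gap(2) by linarith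
  show "L v < L u" using gap by linarith
qed

lemma new_load_decreased_gt_Min:
  assumes "finite V" "new_load V nb L acc x < L x"
  shows "Min (L ` V) < new_load V nb L acc x"
  using new_load_lt_imp_exists_below[OF assms(2)] assms(1)
  by (meson Min_le finite_imageI image_eqI order.strict_trans1)

lemma new_load_increased_lt_Max:
  assumes "finite V" "L x < new_load V nb L acc x"
  shows "new_load V nb L acc x < Max (L ` V)"
  using new_load_gt_imp_exists_above[OF assms(2)] assms(1)
  by (meson Max_ge finite_imageI image_eqI order.strict_trans2)

lemma Max_new_load_le:
  assumes "finite V" "V \<noteq> {}"
  shows "Max (new_load V nb L acc ` V) \<le> Max (L ` V)"
proof -
  have "new_load V nb L acc x \<le> Max (L ` V)" if "x \<in> V" for x
  proof -
    have "L x \<le> Max (L ` V)" using assms(1) that by simp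
    then show ?thesis using new_load_increased_lt_Max[OF assms(1), of x] by linarith
  qed
  then show ?thesis using assms by simp
qed

lemma Min_new_load_ge:
  assumes "finite V" "V \<noteq> {}"
  shows "Min (L ` V) \<le> Min (new_load V nb L acc ` V)"
proof -
  have "Min (L ` V) \<le> new_load V nb L acc x" if "x \<in> V" for x
  proof -
    have "Min (L ` V) \<le> L x" using assms(1) that by simp
    then show ?thesis using new_load_decreased_gt_Min[OF assms(1), of x] by linarith
  qed
  then show ?thesis using assms by simp
qed

end

lemma monotonic_if_finite:
  assumes "finite V" "V \<noteq> {}"
  shows "monotonic V nb"
  unfolding monotonic_def
proof (intro allI impI conjI)
  fix Ls :: "nat \<Rightarrow> 'a \<Rightarrow> int" and As i
  assume "(\<forall>u\<in>V. 0 \<le> Ls 0 u) \<and>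
    (\<forall>i. valid_acc V nb (Ls i) (As i) \<and> Ls (Suc i) = new_load V nb (Ls i) (As i))"
  then have valid: "valid_acc V nb (Ls i) (As i)"
    and step: "Ls (Suc i) = new_load V nb (Ls i) (As i)" by simp_all
  show "\<forall>u\<in>V. \<forall>v\<in>V. As i v = Some u \<longrightarrow> Ls i v < Ls i u"
    using transfer_preserves_order(2)[OF valid] by simp
  show "Max (Ls (Suc i) ` V) \<le> Max (Ls i ` V)"
    unfolding step using Max_new_load_le[OF valid assms] .
  show "Min (Ls i ` V) \<le> Min (Ls (Suc i) ` V)"
    unfolding step using Min_new_load_ge[OF valid assms] .
qed

theorem lemma6:
  fixes V :: "'a set" and E :: "'a \<Rightarrow> 'a \<Rightarrow> bool" and nb :: "'a \<Rightarrow> 'a list"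
    and L :: "'a \<Rightarrow> int" and acc :: "'a \<Rightarrow> 'a option"
  assumes "graph_ok V E nb"
    and "\<forall>u\<in>V. 0 \<le> L u"
    and "valid_acc V nb L acc"
  shows "(\<forall>u\<in>V. \<forall>v\<in>V. acc v = Some u \<longrightarrow> new_load V nb L acc v \<le> new_load V nb L acc u)
       \<and> (\<forall>x\<in>V. new_load V nb L acc x < L x \<longrightarrow> Min (L ` V) < new_load V nb L acc x)
       \<and> (\<forall>x\<in>V. L x < new_load V nb L acc x \<longrightarrow> new_load V nb L acc x < Max (L ` V))
       \<and> monotonic V nb"
proof (intro conjI ballI impI)
  have V: "finite V" "V \<noteq> {}" using assms(1) unfolding graph_ok_def by auto
  show "new_load V nb L acc v \<le> new_load V nb L acc u" if "acc v = Some u" for u v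
    using transfer_preserves_order(1)[OF assms(3) that] .
  show "Min (L ` V) < new_load V nb L acc x" if "new_load V nb L acc x < L x" for x
    using new_load_decreased_gt_Min[OF assms(3) V(1) that] .
  show "new_load V nb L acc x < Max (L ` V)" if "L x < new_load V nb L acc x" for x
    using new_load_increased_lt_Max[OF assms(3) V(1) that] .
  show "monotonic V nb" using monotonic_if_finite[OF V] .
qed

end
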